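(* If an $R$-module $M$ is prime and uniform, then $M$ is strongly prime.
   Context: $R$ is a commutative Noetherian local ring. A module $M\neq0$ is prime if every $r\in R$ acts on $M$ either as zero or injectively. A module is uniform if it is nonzero and any two nonzero submodules intersect nontrivially. A module $M\ne0$ is strongly prime if every nonzero $R$-endomorphism $f:M\to M$ is injective. *)

theory Defs
  imports Complex_Main
begin

definition is_ideal :: "'a::comm_ring_1 set \<Rightarrow> bool" where
  "is_ideal I \<longleftrightarrow> module.subspace ((*) :: 'a \<Rightarrow> 'a \<Rightarrow> 'a) I"

definition maximal_ideal :: "'a::comm_ring_1 set \<Rightarrow> bool" where
  "maximal_ideal m \<longleftrightarrow> is_ideal m \<and> m \<noteq> UNIV \<and>
     (\<forall>J. is_ideal J \<and> m \<subseteq> J \<longrightarrow> J = m \<or> J = UNIV)"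

definition noetherian_ring :: "'a::comm_ring_1 itself \<Rightarrow> bool" where
  "noetherian_ring _ \<longleftrightarrow>
     (\<forall>I::'a set. is_ideal I \<longrightarrow>
        (\<exists>F. finite F \<and> I = module.span ((*) :: 'a \<Rightarrow> 'a \<Rightarrow> 'a) F))"

definition local_ring :: "'a::comm_ring_1 itself \<Rightarrow> bool" where
  "local_ring _ \<longleftrightarrow> (\<exists>!m::'a set. maximal_ideal m)"

text \<open>An R-module is given by a type 'm::ab_group_add with scalar multiplication
  scale satisfying the module axioms; the module is all of the type.\<close>

definition prime_module :: "('a::comm_ring_1 \<Rightarrow> 'm::ab_group_add \<Rightarrow> 'm) \<Rightarrow> bool" where
  "prime_module scale \<longleftrightarrow> module scale \<and> (\<exists>x::'m. x \<noteq> 0) \<and>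
     (\<forall>r. (\<forall>x. scale r x = 0) \<or> inj (scale r))"

definition uniform_module :: "('a::comm_ring_1 \<Rightarrow> 'm::ab_group_add \<Rightarrow> 'm) \<Rightarrow> bool" where
  "uniform_module scale \<longleftrightarrow> module scale \<and> (\<exists>x::'m. x \<noteq> 0) \<and>
     (\<forall>N1 N2. module.subspace scale N1 \<and> module.subspace scale N2 \<and>
        N1 \<noteq> {0} \<and> N2 \<noteq> {0} \<longrightarrow> N1 \<inter> N2 \<noteq> {0})"

definition strongly_prime_module :: "('a::comm_ring_1 \<Rightarrow> 'm::ab_group_add \<Rightarrow> 'm) \<Rightarrow> bool" where
  "strongly_prime_module scale \<longleftrightarrow> module scale \<and> (\<exists>x::'m. x \<noteq> 0) \<and>
     (\<forall>f. module_hom scale scale f \<and> f \<noteq> (\<lambda>x. 0) \<longrightarrow> inj f)"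

end

theory Submission
  imports Defs
begin

text \<open>If an endomorphism \<open>f \<noteq> 0\<close> kills some \<open>x \<noteq> 0\<close>, pick \<open>y\<close> with \<open>f y \<noteq> 0\<close>.
  By uniformity the cyclic submodules \<open>R x\<close> and \<open>R y\<close> share some \<open>z = a x = b y \<noteq> 0\<close>.
  Then \<open>b f(y) = f z = a f(x) = 0\<close>; but \<open>b\<close> does not annihilate \<open>y\<close>, so by primeness
  it acts injectively and \<open>f y = 0\<close>, a contradiction.\<close>

lemma (in module) uniform_cyclic_submodules_meet:
  assumes "uniform_module scale" and "x \<noteq> 0" and "y \<noteq> 0"
  obtains a b where "scale a x = scale b y" and "scale b y \<noteq> 0"
proof -
  have "span {x} \<noteq> {0}" "span {y} \<noteq> {0}"
    using assms(2,3) span_base[of x "{x}"] span_base[of y "{y}"] by auto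
  with assms(1) have "span {x} \<inter> span {y} \<noteq> {0}"
    unfolding uniform_module_def using subspace_span by blast
  then obtain z where "z \<in> span {x}" "z \<in> span {y}" "z \<noteq> 0"
    using span_zero by blast
  then show thesis
    using that unfolding span_singleton by auto
qed

lemma endomorphism_inj_if_prime_uniform:
  fixes scale :: "'a::comm_ring_1 \<Rightarrow> 'm::ab_group_add \<Rightarrow> 'm"
  assumes prime: "prime_module scale" and uniform: "uniform_module scale"
    and "module_hom scale scale f" and "f \<noteq> (\<lambda>x. 0)"
  shows "inj f"
proof -
  interpret module_hom scale scale f by fact
  obtain y where fy: "f y \<noteq> 0"
    using \<open>f \<noteq> (\<lambda>x. 0)\<close> by auto
  have "x = 0" if "f x = 0" for x
  proof (rule ccontr)
    assume "x \<noteq> 0"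
    moreover have "y \<noteq> 0"
      using fy by auto
    ultimately obtain a b where ab: "scale a x = scale b y" and by0: "scale b y \<noteq> 0"
      using m1.uniform_cyclic_submodules_meet[OF uniform] by metis
    have "inj (scale b)"
      using prime by0 unfolding prime_module_def by blast
    moreover have "scale b (f y) = scale b 0"
      using ab \<open>f x = 0\<close> by (metis scale m1.scale_zero_right)
    ultimately show False
      using fy by (meson injD)
  qed
  then show ?thesis
    using inj_iff_eq_0 by blast
qed

theorem lemma2p1:
  fixes scale :: "'a::comm_ring_1 \<Rightarrow> 'm::ab_group_add \<Rightarrow> 'm"
  assumes "noetherian_ring TYPE('a)"
    and "local_ring TYPE('a)"
    and "module scale"
    and "prime_module scale"
    and "uniform_module scale"
  shows "strongly_prime_module scale"
  using assms(3-5) endomorphism_inj_if_prime_uniform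
  unfolding strongly_prime_module_def prime_module_def by blast

end
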